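(* (i) If $\mathbf p=\{p_1,\dots,p_n\}$ is an admissible tuple and $\mathsf P=[\partial_{c[j]}p_i]_{1\le i,j\le n}$, then $\partial_k(\mathsf P)=\gamma_k(\mathsf P)$ for all $k=1,\dots,n-1$. (ii) Conversely, let $\mathsf Q=[q_{ij}]\in\mathrm{Mat}(n,\mathbb Q[\mathbf x])$ be invertible, with each $q_{ij}$ homogeneous of degree $j-i$ (so $q_{ij}=0$ if $j<i$), and with $\partial_k(\mathsf Q)=\gamma_k(\mathsf Q)$ for $k=1,\dots,n-1$. Then the tuple $\{q_{1n},\dots,q_{nn}\}$ is admissible and $q_{ij}=\partial_{c[j]}q_{in}$ for all $i,j$.
   Context: $\mathbb Q[\mathbf x]=\mathbb Q[x_1,\dots,x_n]$ with $\deg x_i=1$; $\partial_k=(1-s_k)/(x_k-x_{k+1})$ the divided difference, applied entrywise to matrices; $c[j]=s_js_{j+1}\cdots s_{n-1}$ ($c[n]=\mathrm{id}$) and $\partial_{c[j]}=\partial_j\cdots\partial_{n-1}$. A tuple $\mathbf p=\{p_1,\dots,p_n\}\subset\mathbb Q[\mathbf x]$ is admissible if each $p_j$ is symmetric in $x_1,\dots,x_{n-1}$, homogeneous of degree $n-j$, and $\partial_{c[j]}p_j\in\mathbb Q^\times$. For a matrix $A$ with $n$ columns, $\gamma_k(A)_{ij}=\delta_{j,k+1}A_{ik}$ (the $k$-th column moved to position $k+1$, other entries zero). *)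

theory Defs
  imports Complex_Main "HOL-Library.Poly_Mapping" "HOL-Combinatorics.Permutations"
begin

text \<open>Multivariate polynomials over the rationals: finitely supported maps from
monomials (exponent vectors, finitely supported nat => nat; variable x_i has index i)
to coefficients.\<close>

type_synonym mpoly = "(nat \<Rightarrow>\<^sub>0 nat) \<Rightarrow>\<^sub>0 rat"

definition Var :: "nat \<Rightarrow> mpoly" where
  "Var i = Poly_Mapping.single (Poly_Mapping.single i 1) 1"

definition const :: "rat \<Rightarrow> mpoly" where
  "const c = Poly_Mapping.single 0 c"

definition in_ring :: "nat \<Rightarrow> mpoly \<Rightarrow> bool" where
  "in_ring n p \<longleftrightarrow> (\<forall>m \<in> Poly_Mapping.keys p. \<forall>i \<in> Poly_Mapping.keys m. 1 \<le> i \<and> i \<le> n)"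

text \<open>Total degree of a monomial and homogeneity (the zero polynomial is homogeneous of every degree).\<close>
definition mdeg :: "(nat \<Rightarrow>\<^sub>0 nat) \<Rightarrow> nat" where
  "mdeg m = (\<Sum>i\<in>Poly_Mapping.keys m. Poly_Mapping.lookup m i)"

definition homogeneous :: "nat \<Rightarrow> mpoly \<Rightarrow> bool" where
  "homogeneous d p \<longleftrightarrow> (\<forall>m \<in> Poly_Mapping.keys p. mdeg m = d)"

definition rename_mono :: "(nat \<Rightarrow> nat) \<Rightarrow> (nat \<Rightarrow>\<^sub>0 nat) \<Rightarrow> (nat \<Rightarrow>\<^sub>0 nat)" where
  "rename_mono \<sigma> m = (\<Sum>i\<in>Poly_Mapping.keys m. Poly_Mapping.single (\<sigma> i) (Poly_Mapping.lookup m i))"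

definition rename :: "(nat \<Rightarrow> nat) \<Rightarrow> mpoly \<Rightarrow> mpoly" where
  "rename \<sigma> p = (\<Sum>m\<in>Poly_Mapping.keys p. Poly_Mapping.single (rename_mono \<sigma> m) (Poly_Mapping.lookup p m))"

definition sk :: "nat \<Rightarrow> nat \<Rightarrow> nat" where
  "sk k i = (if i = k then Suc k else if i = Suc k then k else i)"

text \<open>Divided difference: the (unique, since mpoly is a domain) q with
(x_k - x_(k+1)) * q = p - s_k p.\<close>
definition divdiff :: "nat \<Rightarrow> mpoly \<Rightarrow> mpoly" where
  "divdiff k p = (THE q. (Var k - Var (Suc k)) * q = p - rename (sk k) p)"

text \<open>partial_(c[j]) = partial_j partial_(j+1) ... partial_(n-1)  (identity for j = n).\<close>
definition dc :: "nat \<Rightarrow> nat \<Rightarrow> mpoly \<Rightarrow> mpoly" where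
  "dc n j p = foldr divdiff [j..<n] p"

definition symmetric_first :: "nat \<Rightarrow> mpoly \<Rightarrow> bool" where
  "symmetric_first n p \<longleftrightarrow> (\<forall>\<sigma>. \<sigma> permutes {1..n-1} \<longrightarrow> rename \<sigma> p = p)"

definition admissible :: "nat \<Rightarrow> (nat \<Rightarrow> mpoly) \<Rightarrow> bool" where
  "admissible n p \<longleftrightarrow> (\<forall>j\<in>{1..n}. in_ring n (p j) \<and> symmetric_first n (p j)
      \<and> homogeneous (n - j) (p j) \<and> (\<exists>c. c \<noteq> 0 \<and> dc n j (p j) = const c))"

definition mat_in_ring :: "nat \<Rightarrow> (nat \<Rightarrow> nat \<Rightarrow> mpoly) \<Rightarrow> bool" where
  "mat_in_ring n A \<longleftrightarrow> (\<forall>i\<in>{1..n}. \<forall>j\<in>{1..n}. in_ring n (A i j))"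

definition mat_mult :: "nat \<Rightarrow> (nat \<Rightarrow> nat \<Rightarrow> mpoly) \<Rightarrow> (nat \<Rightarrow> nat \<Rightarrow> mpoly) \<Rightarrow> nat \<Rightarrow> nat \<Rightarrow> mpoly" where
  "mat_mult n A B i j = (\<Sum>l\<in>{1..n}. A i l * B l j)"

definition invertible_over :: "nat \<Rightarrow> (nat \<Rightarrow> nat \<Rightarrow> mpoly) \<Rightarrow> bool" where
  "invertible_over n A \<longleftrightarrow> (\<exists>B. mat_in_ring n B \<and>
     (\<forall>i\<in>{1..n}. \<forall>j\<in>{1..n}. mat_mult n A B i j = (if i = j then 1 else 0)
                             \<and> mat_mult n B A i j = (if i = j then 1 else 0)))"

text \<open>Entrywise divided difference equals gamma_k: column k moved to column k+1, others zero.\<close>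
definition dd_gamma :: "nat \<Rightarrow> nat \<Rightarrow> (nat \<Rightarrow> nat \<Rightarrow> mpoly) \<Rightarrow> bool" where
  "dd_gamma n k A \<longleftrightarrow> (\<forall>i\<in>{1..n}. \<forall>j\<in>{1..n}.
      divdiff k (A i j) = (if j = Suc k then A i k else 0))"

end

theory Submission
  imports Defs
begin

text \<open>
  (i) Entry (i,j) of P is \<open>\<partial>\<^bsub>c[j]\<^esub> p\<^sub>i\<close>, so \<open>\<partial>\<^sub>k\<close> sends column k+1 to column k by definition,
  and it remains to see that every other column is \<open>s\<^sub>k\<close>-invariant, i.e. killed by \<open>\<partial>\<^sub>k\<close>.
  For j \<ge> k+2 this holds because \<open>p\<^sub>i\<close> is \<open>s\<^sub>k\<close>-invariant and \<open>s\<^sub>k\<close> commutes with \<open>\<partial>\<^sub>m\<close> for \<open>|m-k| \<ge> 2\<close>;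
  for j = k because the image of \<open>\<partial>\<^sub>k\<close> is \<open>s\<^sub>k\<close>-invariant; for j < k because
  \<open>\<partial>\<^bsub>k-1\<^esub>\<partial>\<^sub>k r\<close> is \<open>s\<^sub>k\<close>-invariant whenever r is \<open>s\<^bsub>k-1\<^esub>\<close>-invariant, the remaining factors
  \<open>\<partial>\<^sub>m\<close>, m \<le> k-2, again commuting with \<open>s\<^sub>k\<close>.

  (ii) The relations \<open>\<partial>\<^sub>j q\<^bsub>i,j+1\<^esub> = q\<^bsub>ij\<^esub>\<close> recover every column from the last one, and
  \<open>\<partial>\<^sub>k q\<^bsub>in\<^esub> = 0\<close> for k < n-1 makes the last column symmetric in \<open>x\<^sub>1,\<dots>,x\<^bsub>n-1\<^esub>\<close>.
  The diagonal entries are homogeneous of degree 0, i.e. constants, and they are nonzero: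
  taking constant terms in \<open>Q\<^sup>-\<^sup>1 Q = 1\<close> gives \<open>(Q\<^sup>-\<^sup>1)\<^sub>j\<^sub>j(0) \<cdot> q\<^sub>j\<^sub>j = 1\<close>, since all other
  entries of column j have positive degree or vanish.
\<close>

section \<open>Renaming of variables\<close>

lemma poly_mapping_sum_single:
  fixes p :: "'a \<Rightarrow>\<^sub>0 'b::comm_monoid_add"
  shows "p = (\<Sum>k\<in>Poly_Mapping.keys p. Poly_Mapping.single k (Poly_Mapping.lookup p k))"
  by (rule poly_mapping_eqI) (auto simp: lookup_sum lookup_single when_def in_keys_iff)

lemma sum_keys_superset:
  fixes p :: "'a \<Rightarrow>\<^sub>0 'b::zero" and f :: "'a \<Rightarrow> 'b \<Rightarrow> 'c::comm_monoid_add"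
  assumes "finite S" "Poly_Mapping.keys p \<subseteq> S" "\<And>k. f k 0 = 0"
  shows "(\<Sum>k\<in>Poly_Mapping.keys p. f k (Poly_Mapping.lookup p k)) = (\<Sum>k\<in>S. f k (Poly_Mapping.lookup p k))"
  by (rule sum.mono_neutral_left) (use assms in \<open>auto simp: in_keys_iff\<close>)

lemma rename_mono_eq_sum_superset:
  "finite S \<Longrightarrow> Poly_Mapping.keys m \<subseteq> S \<Longrightarrow>
   rename_mono \<sigma> m = (\<Sum>i\<in>S. Poly_Mapping.single (\<sigma> i) (Poly_Mapping.lookup m i))"
  unfolding rename_mono_def by (rule sum_keys_superset) auto

lemma rename_mono_add: "rename_mono \<sigma> (m + m') = rename_mono \<sigma> m + rename_mono \<sigma> m'"
proof -
  let ?S = "Poly_Mapping.keys m \<union> Poly_Mapping.keys m'"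
  have "rename_mono \<sigma> (m + m') = (\<Sum>i\<in>?S. Poly_Mapping.single (\<sigma> i) (Poly_Mapping.lookup (m + m') i))"
    by (rule rename_mono_eq_sum_superset) (auto simp: keys_add)
  also have "\<dots> = (\<Sum>i\<in>?S. Poly_Mapping.single (\<sigma> i) (Poly_Mapping.lookup m i))
                 + (\<Sum>i\<in>?S. Poly_Mapping.single (\<sigma> i) (Poly_Mapping.lookup m' i))"
    by (simp add: lookup_add single_add sum.distrib)
  also have "\<dots> = rename_mono \<sigma> m + rename_mono \<sigma> m'"
    by (simp add: rename_mono_eq_sum_superset[of ?S m] rename_mono_eq_sum_superset[of ?S m'])
  finally show ?thesis .
qed

lemma rename_mono_zero [simp]: "rename_mono \<sigma> 0 = 0"
  by (simp add: rename_mono_def)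

lemma rename_mono_single [simp]:
  "rename_mono \<sigma> (Poly_Mapping.single i e) = Poly_Mapping.single (\<sigma> i) e"
  by (simp add: rename_mono_def)

lemma rename_mono_sum: "rename_mono \<sigma> (sum f A) = (\<Sum>a\<in>A. rename_mono \<sigma> (f a))"
  by (induction A rule: infinite_finite_induct) (auto simp: rename_mono_add)

lemma rename_mono_comp: "rename_mono f (rename_mono g m) = rename_mono (f \<circ> g) m"
  by (simp add: rename_mono_def[of g] rename_mono_def[of "f \<circ> g"] rename_mono_sum)

lemma rename_mono_id: "rename_mono id m = m"
  by (simp add: rename_mono_def poly_mapping_sum_single[symmetric])

lemma rename_eq_sum_superset:
  "finite S \<Longrightarrow> Poly_Mapping.keys p \<subseteq> S \<Longrightarrow>
   rename \<sigma> p = (\<Sum>m\<in>S. Poly_Mapping.single (rename_mono \<sigma> m) (Poly_Mapping.lookup p m))"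
  unfolding rename_def by (rule sum_keys_superset) auto

lemma rename_add: "rename \<sigma> (p + q) = rename \<sigma> p + rename \<sigma> q"
proof -
  let ?S = "Poly_Mapping.keys p \<union> Poly_Mapping.keys q"
  have "rename \<sigma> (p + q) = (\<Sum>m\<in>?S. Poly_Mapping.single (rename_mono \<sigma> m) (Poly_Mapping.lookup (p + q) m))"
    by (rule rename_eq_sum_superset) (auto simp: keys_add)
  also have "\<dots> = (\<Sum>m\<in>?S. Poly_Mapping.single (rename_mono \<sigma> m) (Poly_Mapping.lookup p m))
                 + (\<Sum>m\<in>?S. Poly_Mapping.single (rename_mono \<sigma> m) (Poly_Mapping.lookup q m))"
    by (simp add: lookup_add single_add sum.distrib)
  also have "\<dots> = rename \<sigma> p + rename \<sigma> q"
    by (simp add: rename_eq_sum_superset[of ?S p] rename_eq_sum_superset[of ?S q])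
  finally show ?thesis .
qed

lemma rename_zero [simp]: "rename \<sigma> 0 = 0"
  by (simp add: rename_def)

lemma rename_single [simp]:
  "rename \<sigma> (Poly_Mapping.single m c) = Poly_Mapping.single (rename_mono \<sigma> m) c"
  by (simp add: rename_def)

lemma rename_sum: "rename \<sigma> (sum f A) = (\<Sum>a\<in>A. rename \<sigma> (f a))"
  by (induction A rule: infinite_finite_induct) (auto simp: rename_add)

lemma rename_comp: "rename f (rename g p) = rename (f \<circ> g) p"
  by (simp add: rename_def[of g] rename_def[of "f \<circ> g"] rename_sum rename_mono_comp)

lemma rename_id: "rename id p = p"
  by (simp add: rename_def rename_mono_id poly_mapping_sum_single[symmetric])

lemma rename_uminus: "rename \<sigma> (- p) = - rename \<sigma> p"
  by (metis add.inverse_unique rename_add rename_zero add.right_inverse)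

lemma rename_diff: "rename \<sigma> (p - q) = rename \<sigma> p - rename \<sigma> q"
  by (simp only: diff_conv_add_uminus rename_add rename_uminus)

lemma rename_mult: "rename \<sigma> (p * q) = rename \<sigma> p * rename \<sigma> q"
proof -
  let ?t = "\<lambda>p a. Poly_Mapping.single a (Poly_Mapping.lookup p a) :: mpoly"
  have "p * q = (\<Sum>a\<in>Poly_Mapping.keys p. \<Sum>b\<in>Poly_Mapping.keys q. ?t p a * ?t q b)"
    by (subst poly_mapping_sum_single[of p], subst poly_mapping_sum_single[of q]) (rule sum_product)
  then have "rename \<sigma> (p * q)
      = (\<Sum>a\<in>Poly_Mapping.keys p. \<Sum>b\<in>Poly_Mapping.keys q. rename \<sigma> (?t p a) * rename \<sigma> (?t q b))"
    by (simp add: rename_sum mult_single rename_mono_add)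
  also have "\<dots> = (\<Sum>a\<in>Poly_Mapping.keys p. rename \<sigma> (?t p a)) * (\<Sum>b\<in>Poly_Mapping.keys q. rename \<sigma> (?t q b))"
    by (rule sum_product[symmetric])
  also have "\<dots> = rename \<sigma> p * rename \<sigma> q"
    unfolding rename_single by (simp only: rename_def)
  finally show ?thesis .
qed

lemma rename_Var [simp]: "rename \<sigma> (Var i) = Var (\<sigma> i)"
  by (simp add: Var_def)

section \<open>Divided differences\<close>

lemma Var_eq_iff: "Var i = Var j \<longleftrightarrow> i = j"
proof
  assume "Var i = Var j"
  then have "Poly_Mapping.lookup (Var i) (Poly_Mapping.single i 1) = Poly_Mapping.lookup (Var j) (Poly_Mapping.single i 1)"
    by simp
  then have "Poly_Mapping.single j (1::nat) = Poly_Mapping.single i 1"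
    by (auto simp: Var_def lookup_single when_def split: if_splits)
  then have "Poly_Mapping.lookup (Poly_Mapping.single j (1::nat)) i = Poly_Mapping.lookup (Poly_Mapping.single i 1) i"
    by simp
  then show "i = j" by (auto simp: lookup_single when_def split: if_splits)
qed simp

lemma single_single_eq_Var_power:
  "(Poly_Mapping.single (Poly_Mapping.single i e) 1 :: mpoly) = Var i ^ e"
proof (induction e)
  case (Suc e)
  have "Poly_Mapping.single i (Suc e) = Poly_Mapping.single i e + Poly_Mapping.single i (1::nat)"
    by (simp flip: single_add)
  then have "(Poly_Mapping.single (Poly_Mapping.single i (Suc e)) 1 :: mpoly)
      = Poly_Mapping.single (Poly_Mapping.single i e) 1 * Var i"
    by (simp add: Var_def mult_single)
  then show ?case using Suc by simp
qed simp

lemma update_eq_add_single: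
  "a \<notin> Poly_Mapping.keys f \<Longrightarrow> Poly_Mapping.update a b f = f + Poly_Mapping.single a b"
  by (rule poly_mapping_eqI) (auto simp: lookup_update lookup_add lookup_single when_def in_keys_iff)

lemma mpoly_induct [case_names const Var add mult]:
  assumes const: "\<And>c. P (Poly_Mapping.single 0 c)"
    and Var: "\<And>i. P (Var i)"
    and add: "\<And>p q. P p \<Longrightarrow> P q \<Longrightarrow> P (p + q)"
    and mult: "\<And>p q. P p \<Longrightarrow> P q \<Longrightarrow> P (p * q)"
  shows "P (p :: mpoly)"
proof -
  have power: "P (q ^ e)" if "P q" for q e
    using that const[of 1] by (induction e) (auto simp: mult)
  have monomial: "P (Poly_Mapping.single m 1)" for m
  proof (induction m rule: update_induct)
    case const
    then show ?case using assms(1)[of 1] by simp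
  next
    case (update f a b)
    then have "Poly_Mapping.single (Poly_Mapping.update a b f) (1::rat) = Poly_Mapping.single f 1 * Var a ^ b"
      by (simp add: update_eq_add_single mult_single flip: single_single_eq_Var_power)
    then show ?case using update.IH mult power Var by simp
  qed
  have single: "P (Poly_Mapping.single m c)" for m c
    using mult[OF const monomial, of c m] by (simp add: mult_single)
  have sum: "P (sum f A)" if "\<And>a. P (f a)" for f :: "_ \<Rightarrow> mpoly" and A
    using that const[of 0] by (induction A rule: infinite_finite_induct) (auto simp: add)
  show ?thesis
    by (subst poly_mapping_sum_single) (rule sum, rule single)
qed

lemma Var_diff_Var_dvd_sub_rename_sk: "(Var k - Var (Suc k)) dvd (p - rename (sk k) p)"
proof (induction p rule: mpoly_induct)
  case (Var i)
  consider "i = k" | "i = Suc k" | "i \<noteq> k" "i \<noteq> Suc k" by blast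
  then show ?case
  proof cases
    case 2
    then have "Var i - rename (sk k) (Var i) = - (Var k - Var (Suc k))" by (simp add: sk_def)
    then show ?thesis by (simp only: dvd_minus_iff dvd_refl)
  qed (simp_all add: sk_def)
next
  case (add p q)
  then show ?case
    by (metis (no_types, lifting) add_diff_add dvd_add rename_add)
next
  case (mult p q)
  have "p * q - rename (sk k) (p * q)
      = (p - rename (sk k) p) * q + rename (sk k) p * (q - rename (sk k) q)"
    by (simp add: rename_mult algebra_simps)
  then show ?case using mult by (metis dvd_add dvd_mult dvd_mult2)
qed simp

lemma divdiff_eq: "(Var k - Var (Suc k)) * divdiff k p = p - rename (sk k) p"
proof -
  have "Var k - Var (Suc k) \<noteq> 0" by (simp add: Var_eq_iff)
  with Var_diff_Var_dvd_sub_rename_sk[of k p]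
  have "\<exists>!q. (Var k - Var (Suc k)) * q = p - rename (sk k) p"
    by (metis dvdE mult_left_cancel)
  from theI'[OF this] show ?thesis unfolding divdiff_def .
qed

lemma divdiff_unique: "(Var k - Var (Suc k)) * q = p - rename (sk k) p \<Longrightarrow> divdiff k p = q"
  using divdiff_eq[of k p] by (metis Var_eq_iff mult_left_cancel n_not_Suc_n right_minus_eq)

lemma rename_sk_sk [simp]: "rename (sk k) (rename (sk k) p) = p"
proof -
  have "sk k \<circ> sk k = id" by (rule ext) (simp add: sk_def)
  then show ?thesis by (simp add: rename_comp rename_id)
qed

lemma divdiff_eq_0_iff: "divdiff k p = 0 \<longleftrightarrow> rename (sk k) p = p"
  using divdiff_eq[of k p] divdiff_unique[of k 0 p] by auto

lemma rename_sk_divdiff: "rename (sk k) (divdiff k p) = divdiff k p"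
proof -
  have "(Var (Suc k) - Var k) * rename (sk k) (divdiff k p) = rename (sk k) p - p"
    using arg_cong[OF divdiff_eq[of k p], of "rename (sk k)"]
    by (simp add: rename_mult rename_diff sk_def)
  then have "(Var k - Var (Suc k)) * rename (sk k) (divdiff k p) = (Var k - Var (Suc k)) * divdiff k p"
    using divdiff_eq[of k p] by (metis minus_diff_eq mult_minus_left)
  then show ?thesis by (simp add: Var_eq_iff)
qed

lemma rename_sk_divdiff_commute:
  assumes "Suc (Suc k) \<le> m \<or> Suc (Suc m) \<le> k"
  shows "rename (sk k) (divdiff m p) = divdiff m (rename (sk k) p)"
proof (rule divdiff_unique[symmetric])
  have "sk k \<circ> sk m = sk m \<circ> sk k" "sk k m = m" "sk k (Suc m) = Suc m"
    using assms by (auto simp: sk_def)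
  then show "(Var m - Var (Suc m)) * rename (sk k) (divdiff m p)
      = rename (sk k) p - rename (sk m) (rename (sk k) p)"
    using arg_cong[OF divdiff_eq[of m p], of "rename (sk k)"]
    by (simp add: rename_mult rename_diff rename_comp)
qed

lemma vandermonde_mult_divdiff_divdiff:
  assumes "rename (sk a) r = r"
  shows "(Var a - Var (Suc a)) * (Var a - Var (Suc (Suc a))) * (Var (Suc a) - Var (Suc (Suc a)))
           * divdiff a (divdiff (Suc a) r)
         = (Var a - Var (Suc (Suc a))) * (r - rename (sk (Suc a)) r)
           - (Var (Suc a) - Var (Suc (Suc a))) * (r - rename (sk a) (rename (sk (Suc a)) r))"
    (is "?x1x2 * ?x1x3 * ?x2x3 * divdiff a ?u = ?rhs")
proof -
  have u: "?x2x3 * ?u = r - rename (sk (Suc a)) r"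
    by (rule divdiff_eq)
  have "rename (sk a) (?x2x3 * ?u) = rename (sk a) (r - rename (sk (Suc a)) r)"
    by (simp only: u)
  then have su: "?x1x3 * rename (sk a) ?u = r - rename (sk a) (rename (sk (Suc a)) r)"
    by (simp add: rename_mult rename_diff assms sk_def)
  have "?x1x2 * ?x1x3 * ?x2x3 * divdiff a ?u = ?x1x3 * ?x2x3 * (?x1x2 * divdiff a ?u)"
    by (simp add: ac_simps)
  also have "\<dots> = ?x1x3 * (?x2x3 * ?u) - ?x2x3 * (?x1x3 * rename (sk a) ?u)"
    by (subst divdiff_eq[of a]) (simp add: algebra_simps)
  also have "\<dots> = ?rhs"
    by (simp only: u su)
  finally show ?thesis .
qed

text \<open>Applying \<open>s\<^bsub>a+1\<^esub>\<close> to the previous identity changes both sides by the sign of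
  the Vandermonde product D; so \<open>D \<cdot> s\<^bsub>a+1\<^esub> t = D \<cdot> t\<close>, and D cancels in the domain.\<close>

lemma rename_sk_Suc_divdiff_divdiff:
  assumes ra: "rename (sk a) r = r"
  shows "rename (sk (Suc a)) (divdiff a (divdiff (Suc a) r)) = divdiff a (divdiff (Suc a) r)"
proof -
  define x1 x2 x3 where "x1 = Var a" and "x2 = Var (Suc a)" and "x3 = Var (Suc (Suc a))"
  define t where "t = divdiff a (divdiff (Suc a) r)"
  define r1 r2 where "r1 = rename (sk (Suc a)) r" and "r2 = rename (sk a) r1"
  define D where "D = (x1 - x2) * (x1 - x3) * (x2 - x3)"
  have Dt: "D * t = (x1 - x3) * (r - r1) - (x2 - x3) * (r - r2)"
    using vandermonde_mult_divdiff_divdiff[OF ra] by (simp add: x1_def x2_def x3_def t_def D_def r1_def r2_def)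
  have r1: "rename (sk (Suc a)) r1 = r"
    by (simp add: r1_def)
  have "sk (Suc a) \<circ> (sk a \<circ> sk (Suc a)) = sk a \<circ> (sk (Suc a) \<circ> sk a)"
    by (rule ext) (auto simp: sk_def)
  then have r2: "rename (sk (Suc a)) r2 = r2"
    by (metis r1_def r2_def ra rename_comp)
  have "(x1 - x3) * (x1 - x2) * (x3 - x2) * rename (sk (Suc a)) t = (x1 - x2) * (r1 - r) - (x3 - x2) * (r1 - r2)"
    using arg_cong[OF Dt, of "rename (sk (Suc a))"]
    by (simp add: D_def rename_mult rename_diff r1 r2 del: rename_comp)
      (simp add: x1_def x2_def x3_def sk_def r1_def)
  then have "D * rename (sk (Suc a)) t = D * t"
    using Dt unfolding D_def by algebra
  moreover have "D \<noteq> 0"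
    by (simp add: D_def x1_def x2_def x3_def Var_eq_iff)
  ultimately show ?thesis
    by (simp add: t_def)
qed

lemma dc_self [simp]: "dc n n p = p"
  by (simp add: dc_def)

lemma dc_eq_divdiff_dc_Suc: "j < n \<Longrightarrow> dc n j p = divdiff j (dc n (Suc j) p)"
  by (simp add: dc_def upt_conv_Cons)

lemma dc_eq_foldr_dc:
  assumes "j \<le> l" "l \<le> n"
  shows "dc n j p = foldr divdiff [j..<l] (dc n l p)"
proof -
  have "[j..<n] = [j..<l] @ [l..<n]"
    using upt_add_eq_append[of j l "n - l"] assms by simp
  then show ?thesis by (simp add: dc_def)
qed

lemma rename_sk_foldr_divdiff:
  "(\<forall>m\<in>set ms. Suc (Suc k) \<le> m \<or> Suc (Suc m) \<le> k) \<Longrightarrow> rename (sk k) q = q \<Longrightarrow>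
   rename (sk k) (foldr divdiff ms q) = foldr divdiff ms q"
  by (induction ms) (auto simp: rename_sk_divdiff_commute)

lemma sk_eq_transpose: "sk k = Transposition.transpose k (Suc k)"
  by (rule ext) (simp add: sk_def Transposition.transpose_def)

lemma symmetric_first_rename_sk:
  assumes "symmetric_first n p" "1 \<le> k" "Suc k \<le> n - 1"
  shows "rename (sk k) p = p"
proof -
  have "Transposition.transpose k (Suc k) permutes {1..n-1}"
    by (rule permutes_swap_id) (use assms in auto)
  then show ?thesis
    using assms(1) unfolding symmetric_first_def sk_eq_transpose by blast
qed

lemma rename_sk_dc:
  assumes sym: "symmetric_first n q" and k: "k \<in> {1..<n}" and j: "j \<in> {1..n}" "j \<noteq> Suc k"
  shows "rename (sk k) (dc n j q) = dc n j q"
proof -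
  consider "Suc (Suc k) \<le> j" | "j = k" | "j < k"
    using j by linarith
  then show ?thesis
  proof cases
    case 1
    then show ?thesis
      unfolding dc_def using j k by (intro rename_sk_foldr_divdiff symmetric_first_rename_sk[OF sym]) auto
  next
    case 2
    then show ?thesis
      using k by (simp add: dc_eq_divdiff_dc_Suc rename_sk_divdiff)
  next
    case 3
    then obtain a where a: "k = Suc a" "j \<le> a"
      using j by (cases k) auto
    have "rename (sk a) (dc n (Suc k) q) = dc n (Suc k) q"
      unfolding dc_def using k a j by (intro rename_sk_foldr_divdiff symmetric_first_rename_sk[OF sym]) auto
    then have "rename (sk k) (dc n a q) = dc n a q"
      using k a rename_sk_Suc_divdiff_divdiff by (simp add: dc_eq_divdiff_dc_Suc)
    moreover have "dc n j q = foldr divdiff [j..<a] (dc n a q)"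
      using k a by (intro dc_eq_foldr_dc) auto
    ultimately show ?thesis
      using a by (auto intro: rename_sk_foldr_divdiff)
  qed
qed

lemma admissible_dd_gamma:
  assumes "admissible n p" "k \<in> {1..<n}"
  shows "dd_gamma n k (\<lambda>i j. dc n j (p i))"
  unfolding dd_gamma_def
proof (intro ballI)
  fix i j assume i: "i \<in> {1..n}" and j: "j \<in> {1..n}"
  have "symmetric_first n (p i)"
    using assms(1) i unfolding admissible_def by auto
  then show "divdiff k (dc n j (p i)) = (if j = Suc k then dc n k (p i) else 0)"
    using assms(2) j by (auto simp: dc_eq_divdiff_dc_Suc divdiff_eq_0_iff rename_sk_dc)
qed

section \<open>The converse\<close>

lemma dd_gamma_eq_dc_last_column:
  assumes dd: "\<forall>k\<in>{1..<n}. dd_gamma n k Q" and i: "i \<in> {1..n}" and j: "j \<in> {1..n}"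
  shows "Q i j = dc n j (Q i n)"
proof -
  have "j \<le> n" using j by simp
  then show ?thesis
  proof (induction j rule: inc_induct)
    case (step m)
    have "divdiff m (Q i (Suc m)) = Q i m"
      using dd step.hyps j i unfolding dd_gamma_def by auto
    then show ?case
      using step.IH step.hyps by (simp add: dc_eq_divdiff_dc_Suc)
  qed simp
qed

lemma rename_transpose_invariant:
  assumes adj: "\<And>k. 1 \<le> k \<Longrightarrow> Suc k \<le> N \<Longrightarrow> rename (sk k) p = p"
  shows "1 \<le> a \<Longrightarrow> Suc a + d \<le> N \<Longrightarrow> rename (Transposition.transpose a (Suc a + d)) p = p"
proof (induction d)
  case 0
  then show ?case using adj by (simp flip: sk_eq_transpose)
next
  case (Suc d)
  define b where "b = Suc a + d"
  have "Transposition.transpose a (Suc b) = sk b \<circ> (Transposition.transpose a b \<circ> sk b)"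
    by (rule ext) (auto simp: sk_def Transposition.transpose_def b_def)
  then have "rename (Transposition.transpose a (Suc b)) p
      = rename (sk b) (rename (Transposition.transpose a b) (rename (sk b) p))"
    by (simp add: rename_comp)
  also have "\<dots> = p"
    using Suc adj unfolding b_def by simp
  finally show ?case by (simp add: b_def)
qed

lemma rename_permutes_invariant:
  assumes adj: "\<And>k. 1 \<le> k \<Longrightarrow> Suc k \<le> N \<Longrightarrow> rename (sk k) p = p"
    and "\<sigma> permutes {1..N}"
  shows "rename \<sigma> p = p"
  using assms(2) finite_atLeastAtMost
proof (induction \<sigma> rule: permutes_induct)
  case id
  show ?case by (rule rename_id)
next
  case (swap a b \<sigma>)
  have "rename (Transposition.transpose a b) p = p" if "a < b" "a \<in> {1..N}" "b \<in> {1..N}" for a b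
  proof -
    obtain d where "b = Suc a + d" using \<open>a < b\<close> less_imp_Suc_add by blast
    then show ?thesis using that rename_transpose_invariant[OF adj] by auto
  qed
  then have "rename (Transposition.transpose a b) p = p"
    using swap(1-3) by (metis linorder_neqE_nat transpose_commute)
  then have "rename (Transposition.transpose a b) (rename \<sigma> p) = p"
    using swap.IH by simp
  then show ?case
    by (simp only: rename_comp)
qed

lemma mdeg_eq_0_iff: "mdeg m = 0 \<longleftrightarrow> m = 0"
  by (auto simp: mdeg_def in_keys_iff intro: poly_mapping_eqI)

lemma homogeneous_0_eq_const: "homogeneous 0 p \<Longrightarrow> p = const (Poly_Mapping.lookup p 0)"
  unfolding const_def homogeneous_def
  by (rule poly_mapping_eqI) (auto simp: lookup_single when_def in_keys_iff mdeg_eq_0_iff)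

lemma homogeneous_lookup_0:
  assumes "homogeneous d p" "d > 0"
  shows "Poly_Mapping.lookup p 0 = 0"
proof -
  have "0 \<notin> Poly_Mapping.keys p"
    using assms unfolding homogeneous_def mdeg_def by auto
  then show ?thesis by (simp add: in_keys_iff)
qed

lemma lookup_mult_0_if_no_constant_term:
  assumes "Poly_Mapping.lookup (q :: mpoly) 0 = 0"
  shows "Poly_Mapping.lookup (p * q) 0 = 0"
proof -
  have summand_0: "b = 0" if "(0 :: nat \<Rightarrow>\<^sub>0 nat) = a + b" for a b
    by (rule poly_mapping_eqI) (metis add_is_0 lookup_add lookup_zero that)
  have "0 \<notin> Poly_Mapping.keys (p * q)"
  proof
    assume "0 \<in> Poly_Mapping.keys (p * q)"
    then obtain a b where ab: "0 = a + b" and b: "b \<in> Poly_Mapping.keys q"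
      using keys_mult by blast
    from ab have "b = 0"
      by (rule summand_0)
    then show False
      using assms b by (simp add: in_keys_iff)
  qed
  then show ?thesis by (simp add: in_keys_iff)
qed

lemma lookup_mult_0: "Poly_Mapping.lookup ((p :: mpoly) * q) 0 = Poly_Mapping.lookup p 0 * Poly_Mapping.lookup q 0"
proof -
  define c d where "c = Poly_Mapping.lookup p 0" and "d = Poly_Mapping.lookup q 0"
  define p' q' where "p' = p - Poly_Mapping.single 0 c" and "q' = q - Poly_Mapping.single 0 d"
  have "Poly_Mapping.lookup p' 0 = 0" "Poly_Mapping.lookup q' 0 = 0"
    by (simp_all add: p'_def q'_def c_def d_def lookup_minus)
  moreover have "p * q = Poly_Mapping.single 0 (c * d) + Poly_Mapping.single 0 c * q'
      + p' * Poly_Mapping.single 0 d + p' * q'"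
    by (simp add: p'_def q'_def algebra_simps mult_single)
  ultimately show ?thesis
    by (simp add: lookup_add lookup_mult_0_if_no_constant_term c_def d_def mult.commute[of p'])
qed

lemma upper_triangular_invertible_diag_lookup_0:
  assumes inv: "invertible_over n Q"
    and upper: "\<forall>i\<in>{1..n}. \<forall>j\<in>{1..n}. (i \<le> j \<longrightarrow> homogeneous (j - i) (Q i j)) \<and> (j < i \<longrightarrow> Q i j = 0)"
    and j: "j \<in> {1..n}"
  shows "Poly_Mapping.lookup (Q j j) 0 \<noteq> 0"
proof -
  obtain B where B: "mat_mult n B Q j j = 1"
    using inv j unfolding invertible_over_def by (metis atLeastAtMost_iff)
  let ?c = "\<lambda>l. Poly_Mapping.lookup (B j l) 0 * Poly_Mapping.lookup (Q l j) 0"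
  from B have "Poly_Mapping.lookup (\<Sum>l\<in>{1..n}. B j l * Q l j) 0 = 1"
    unfolding mat_mult_def by simp
  then have one: "(\<Sum>l\<in>{1..n}. ?c l) = 1"
    by (simp add: lookup_sum lookup_mult_0)
  have "Poly_Mapping.lookup (Q l j) 0 = 0" if "l \<in> {1..n} - {j}" for l
    using upper that j homogeneous_lookup_0[of "j - l" "Q l j"] by (cases "j < l") auto
  then have "(\<Sum>l\<in>{1..n} - {j}. ?c l) = 0"
    by (intro sum.neutral) simp
  moreover have "(\<Sum>l\<in>{1..n}. ?c l) = ?c j + (\<Sum>l\<in>{1..n} - {j}. ?c l)"
    by (rule sum.remove[OF finite_atLeastAtMost j])
  ultimately have "?c j = 1"
    using one by simp
  then show ?thesis by auto
qed

lemma dd_gamma_admissible_last_column: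
  assumes ring: "mat_in_ring n Q" and inv: "invertible_over n Q"
    and upper: "\<forall>i\<in>{1..n}. \<forall>j\<in>{1..n}. (i \<le> j \<longrightarrow> homogeneous (j - i) (Q i j)) \<and> (j < i \<longrightarrow> Q i j = 0)"
    and dd: "\<forall>k\<in>{1..<n}. dd_gamma n k Q"
  shows "admissible n (\<lambda>i. Q i n)"
  unfolding admissible_def
proof (intro ballI conjI)
  fix j assume j: "j \<in> {1..n}"
  then have n: "n \<in> {1..n}" by auto
  show "in_ring n (Q j n)"
    using ring j n unfolding mat_in_ring_def by blast
  show "homogeneous (n - j) (Q j n)"
    using upper j n by auto
  have "rename (sk k) (Q j n) = Q j n" if "1 \<le> k" "Suc k \<le> n - 1" for k
    using dd that j n by (auto simp: dd_gamma_def simp flip: divdiff_eq_0_iff)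
  then show "symmetric_first n (Q j n)"
    unfolding symmetric_first_def using rename_permutes_invariant by blast
  have "homogeneous 0 (Q j j)"
    using upper[rule_format, OF j j] by simp
  then have "dc n j (Q j n) = const (Poly_Mapping.lookup (Q j j) 0)"
    using dd_gamma_eq_dc_last_column[OF dd j j] homogeneous_0_eq_const by metis
  then show "\<exists>c. c \<noteq> 0 \<and> dc n j (Q j n) = const c"
    using upper_triangular_invertible_diag_lookup_0[OF inv upper j] by blast
qed

theorem lemma4p1:
  fixes n :: nat
  shows "(\<forall>p. admissible n p \<longrightarrow>
            (\<forall>k\<in>{1..<n}. dd_gamma n k (\<lambda>i j. dc n j (p i))))
       \<and> (\<forall>Q. mat_in_ring n Q \<and> invertible_over n Q
            \<and> (\<forall>i\<in>{1..n}. \<forall>j\<in>{1..n}. (i \<le> j \<longrightarrow> homogeneous (j - i) (Q i j)) \<and> (j < i \<longrightarrow> Q i j = 0))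
            \<and> (\<forall>k\<in>{1..<n}. dd_gamma n k Q)
          \<longrightarrow> admissible n (\<lambda>i. Q i n)
            \<and> (\<forall>i\<in>{1..n}. \<forall>j\<in>{1..n}. Q i j = dc n j (Q i n)))"
proof (intro conjI allI impI ballI)
  show "dd_gamma n k (\<lambda>i j. dc n j (p i))" if "admissible n p" "k \<in> {1..<n}" for p k
    using that by (rule admissible_dd_gamma)
  fix Q
  assume "mat_in_ring n Q \<and> invertible_over n Q
      \<and> (\<forall>i\<in>{1..n}. \<forall>j\<in>{1..n}. (i \<le> j \<longrightarrow> homogeneous (j - i) (Q i j)) \<and> (j < i \<longrightarrow> Q i j = 0))
      \<and> (\<forall>k\<in>{1..<n}. dd_gamma n k Q)"
  then show "admissible n (\<lambda>i. Q i n)"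
    and "\<And>i j. i \<in> {1..n} \<Longrightarrow> j \<in> {1..n} \<Longrightarrow> Q i j = dc n j (Q i n)"
    using dd_gamma_admissible_last_column dd_gamma_eq_dc_last_column by blast+
qed

end
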